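(* Let $f$ be a $C^1$ diffeomorphism of $M=\mathbb{R}^d/\mathbb{Z}^d$ and let $x\in M$ be regularly hyperbolic with coefficient $0<\lambda<1$. Then for all positive integers $n,m$ with $n>1/\log(1/\lambda)$ and $n>m$, there is a continuous linear operator $\Upsilon:X_n\to X_m$ with $\Upsilon(\Gamma_{o(x)}\eta)=\eta$ and $\Gamma_{o(x)}(\Upsilon\eta)=\eta$ for all $\eta\in X_n$.
   Context: Tangent spaces identified with $\mathbb{R}^d$, $|\cdot|$ Euclidean norm. $o(x)=(f^k(x))_{k}$, $(\Gamma_{\mathbf{x}}\eta)_k=\eta_k-Df(x_{k-1})\eta_{k-1}$; $\|\eta\|_n=\sup_k e^{-|k|/n}|\eta_k|$, $X_n=\{\|\eta\|_n<\infty\}$. A point $x$ is regularly hyperbolic (with coefficient $\lambda\in(0,1)$) if, with $x_k=f^k(x)$, there is a splitting $T_{x_k}M=E^s(x_k)\oplus E^u(x_k)$ with $Df(x_k)E^{s}(x_k)=E^{s}(x_{k+1})$, $Df(x_k)E^{u}(x_k)=E^{u}(x_{k+1})$, and for each sufficiently small $\varepsilon>0$ a constant $c(x,\varepsilon)$ such that for all $k\in\mathbb{Z}$, $j>0$: $|Df^j(x_k)\eta|\le c(x,\varepsilon)\lambda^je^{\varepsilon|k|}|\eta|$ for $\eta\in E^s(x_k)$, $|Df^{-j}(x_k)\eta|\le c(x,\varepsilon)\lambda^je^{\varepsilon|k|}|\eta|$ for $\eta\in E^u(x_k)$, and if $\eta=\eta^s+\eta^u$ is the splitting of $\eta\in T_{x_k}M$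 then $|\eta^s|,|\eta^u|\le c(x,\varepsilon)e^{\varepsilon|k|}|\eta|$. *)

theory Defs
  imports "HOL-Analysis.Analysis"
begin

text \<open>The torus M = R^d / Z^d is represented through lifts: a C^1 diffeomorphism f of M
  is given by a C^1 diffeomorphism F of R^d (with C^1 inverse G) such that F and G
  commute with the integer lattice modulo Z^d. Tangent spaces are identified with R^d.\<close>

definition int_lattice :: "(real^'n) set" where
  "int_lattice = {z. \<forall>i. z $ i \<in> \<int>}"

definition torus_C1_diffeo ::
  "(real^'n \<Rightarrow> real^'n) \<Rightarrow> (real^'n \<Rightarrow> real^'n)
   \<Rightarrow> (real^'n \<Rightarrow> (real^'n) \<Rightarrow>\<^sub>L (real^'n)) \<Rightarrow> (real^'n \<Rightarrow> (real^'n) \<Rightarrow>\<^sub>L (real^'n)) \<Rightarrow> bool" where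
  "torus_C1_diffeo F G DF DG \<longleftrightarrow>
     (\<forall>x. G (F x) = x) \<and> (\<forall>y. F (G y) = y) \<and>
     (\<forall>x. (F has_derivative blinfun_apply (DF x)) (at x)) \<and> continuous_on UNIV DF \<and>
     (\<forall>x. (G has_derivative blinfun_apply (DG x)) (at x)) \<and> continuous_on UNIV DG \<and>
     (\<forall>x z. z \<in> int_lattice \<longrightarrow> F (x + z) - F x \<in> int_lattice) \<and>
     (\<forall>x z. z \<in> int_lattice \<longrightarrow> G (x + z) - G x \<in> int_lattice)"

definition orb :: "('a \<Rightarrow> 'a) \<Rightarrow> ('a \<Rightarrow> 'a) \<Rightarrow> 'a \<Rightarrow> int \<Rightarrow> 'a" where
  "orb F G x k = (if 0 \<le> k then (F ^^ nat k) x else (G ^^ nat (- k)) x)"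

text \<open>Df^j(x_k) (chain rule: product of Df along the orbit) and Df^{-j}(x_k).\<close>
fun Dfwd :: "('a \<Rightarrow> 'a) \<Rightarrow> ('a \<Rightarrow> 'a) \<Rightarrow> ('a \<Rightarrow> 'b \<Rightarrow>\<^sub>L 'b) \<Rightarrow> 'a \<Rightarrow> int \<Rightarrow> nat
     \<Rightarrow> 'b \<Rightarrow> 'b::real_normed_vector" where
  "Dfwd F G DF x k 0 = id"
| "Dfwd F G DF x k (Suc j) = blinfun_apply (DF (orb F G x (k + int j))) \<circ> Dfwd F G DF x k j"

fun Dbwd :: "('a \<Rightarrow> 'a) \<Rightarrow> ('a \<Rightarrow> 'a) \<Rightarrow> ('a \<Rightarrow> 'b \<Rightarrow>\<^sub>L 'b) \<Rightarrow> 'a \<Rightarrow> int \<Rightarrow> nat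
     \<Rightarrow> 'b \<Rightarrow> 'b::real_normed_vector" where
  "Dbwd F G DG x k 0 = id"
| "Dbwd F G DG x k (Suc j) = blinfun_apply (DG (orb F G x (k - int j))) \<circ> Dbwd F G DG x k j"

definition regularly_hyperbolic ::
  "(real^'n \<Rightarrow> real^'n) \<Rightarrow> (real^'n \<Rightarrow> real^'n)
   \<Rightarrow> (real^'n \<Rightarrow> (real^'n) \<Rightarrow>\<^sub>L (real^'n)) \<Rightarrow> (real^'n \<Rightarrow> (real^'n) \<Rightarrow>\<^sub>L (real^'n))
   \<Rightarrow> real \<Rightarrow> real^'n \<Rightarrow> bool" where
  "regularly_hyperbolic F G DF DG lam x \<longleftrightarrow> 0 < lam \<and> lam < 1 \<and>
    (\<exists>Es Eu :: int \<Rightarrow> (real^'n) set.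
       (\<forall>k. subspace (Es k) \<and> subspace (Eu k) \<and> Es k \<inter> Eu k = {0} \<and>
            {a + b | a b. a \<in> Es k \<and> b \<in> Eu k} = UNIV) \<and>
       (\<forall>k. blinfun_apply (DF (orb F G x k)) ` Es k = Es (k + 1)) \<and>
       (\<forall>k. blinfun_apply (DF (orb F G x k)) ` Eu k = Eu (k + 1)) \<and>
       (\<exists>\<epsilon>0>0. \<forall>\<epsilon>. 0 < \<epsilon> \<and> \<epsilon> < \<epsilon>0 \<longrightarrow> (\<exists>c. \<forall>k::int.
          (\<forall>j>0. \<forall>\<eta>\<in>Es k. norm (Dfwd F G DF x k j \<eta>) \<le> c * lam ^ j * exp (\<epsilon> * \<bar>real_of_int k\<bar>) * norm \<eta>) \<and>
          (\<forall>j>0. \<forall>\<eta>\<in>Eu k. norm (Dbwd F G DG x k j \<eta>) \<le> c * lam ^ j * exp (\<epsilon> * \<bar>real_of_int k\<bar>) * norm \<eta>) \<and>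
          (\<forall>\<eta> \<eta>s \<eta>u. \<eta>s \<in> Es k \<longrightarrow> \<eta>u \<in> Eu k \<longrightarrow> \<eta> = \<eta>s + \<eta>u \<longrightarrow>
              norm \<eta>s \<le> c * exp (\<epsilon> * \<bar>real_of_int k\<bar>) * norm \<eta> \<and>
              norm \<eta>u \<le> c * exp (\<epsilon> * \<bar>real_of_int k\<bar>) * norm \<eta>))))"

definition Gamma :: "('a \<Rightarrow> 'a) \<Rightarrow> ('a \<Rightarrow> 'a) \<Rightarrow> ('a \<Rightarrow> 'b \<Rightarrow>\<^sub>L 'b) \<Rightarrow> 'a
     \<Rightarrow> (int \<Rightarrow> 'b) \<Rightarrow> int \<Rightarrow> 'b::real_normed_vector" where
  "Gamma F G DF x \<eta> k = \<eta> k - blinfun_apply (DF (orb F G x (k - 1))) (\<eta> (k - 1))"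

definition wnorm :: "nat \<Rightarrow> (int \<Rightarrow> 'b::real_normed_vector) \<Rightarrow> real" where
  "wnorm n \<eta> = (SUP k. exp (- \<bar>real_of_int k\<bar> / real n) * norm (\<eta> k))"

definition Xsp :: "nat \<Rightarrow> (int \<Rightarrow> 'b::real_normed_vector) set" where
  "Xsp n = {\<eta>. bdd_above (range (\<lambda>k. exp (- \<bar>real_of_int k\<bar> / real n) * norm (\<eta> k)))}"

end

theory Submission
  imports Defs
begin

(* Proof idea: the inverse of Gamma is a Green operator.
   Let P^s_k, P^u_k be the projections of the splitting at x_k.  Then
     (green eta)_k = sum_{j>=0} Df^j(x_{k-j}) P^s eta_{k-j} - sum_{j>=1} Df^{-j}(x_{k+j}) P^u eta_{k+j}.
   If |eta_i| <= W e^{b|i|}, the hyperbolic estimates with exponent eps bound the j-th terms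
   by c^2 W e^{a|k|} r^j, where a = 2 eps + b and r = lam e^a.  For b = 1/n and eps small
   (possible since 1/n < log(1/lam) and 1/n < 1/m) we get r < 1 and a <= 1/m: both series
   converge geometrically and green maps X_n boundedly into X_m.  Both identities
   green (Gamma eta) = eta and Gamma (green eta) = eta follow by telescoping, because the
   projections commute with Df along the orbit and Df^{-1}(x_k) inverts Df(x_{k-1}). *)

lemma orb_Suc:
  assumes "\<forall>y. F (G y) = y"
  shows "orb F G x (k + 1) = F (orb F G x k)"
proof (cases "k \<ge> 0")
  case True
  then have "nat (k + 1) = Suc (nat k)" by simp
  then show ?thesis using True by (simp add: orb_def)
next
  case False
  then consider "k = -1" | "nat (- k) = Suc (nat (- (k + 1)))" "k + 1 < 0" by linarith
  then show ?thesis using assms by cases (simp_all add: orb_def)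
qed

lemma has_derivative_left_inverse:
  assumes "\<forall>y. G (F y) = y"
    and "(F has_derivative f') (at y)" and "(G has_derivative g') (at (F y))"
  shows "g' (f' v) = v"
proof -
  have "((G \<circ> F) has_derivative (g' \<circ> f')) (at y)"
    by (rule diff_chain_at[OF assms(2,3)])
  moreover have "G \<circ> F = id" using assms(1) by auto
  ultimately have "(id has_derivative (g' \<circ> f')) (at y)" by simp
  then have "g' \<circ> f' = id" using has_derivative_unique has_derivative_id by blast
  then show ?thesis by (metis comp_apply id_apply)
qed

lemma torus_derivative_inverse:
  assumes "torus_C1_diffeo F G DF DG"
  shows "blinfun_apply (DG (orb F G x k)) (blinfun_apply (DF (orb F G x (k - 1))) v) = v"
    and "blinfun_apply (DF (orb F G x (k - 1))) (blinfun_apply (DG (orb F G x k)) v) = v"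
proof -
  have GF: "\<forall>y. G (F y) = y" and FG: "\<forall>y. F (G y) = y"
    and dF: "\<And>y. (F has_derivative blinfun_apply (DF y)) (at y)"
    and dG: "\<And>y. (G has_derivative blinfun_apply (DG y)) (at y)"
    using assms unfolding torus_C1_diffeo_def by simp_all
  have next_point: "orb F G x k = F (orb F G x (k - 1))"
    using orb_Suc[of F G x "k - 1"] FG by simp
  then have prev_point: "orb F G x (k - 1) = G (orb F G x k)" using GF by simp
  show "blinfun_apply (DG (orb F G x k)) (blinfun_apply (DF (orb F G x (k - 1))) v) = v"
    using has_derivative_left_inverse[OF GF dF dG] next_point by simp
  show "blinfun_apply (DF (orb F G x (k - 1))) (blinfun_apply (DG (orb F G x k)) v) = v"
    using has_derivative_left_inverse[OF FG dG dF] prev_point by simp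
qed

lemma linear_Dfwd: "linear (Dfwd F G DF x k j)"
  by (induction j) (simp_all add: linear_iff blinfun.add_right blinfun.scaleR_right)

lemma linear_Dbwd: "linear (Dbwd F G DG x k j)"
  by (induction j) (simp_all add: linear_iff blinfun.add_right blinfun.scaleR_right)

lemma Dfwd_Suc_shift:
  "Dfwd F G DF x (i - 1) (Suc j) v = Dfwd F G DF x i j (blinfun_apply (DF (orb F G x (i - 1))) v)"
proof (induction j)
  case (Suc j)
  have "i - 1 + int (Suc j) = i + int j" by simp
  then show ?case using Suc by simp
qed simp

lemma Dbwd_Suc_shift:
  "Dbwd F G DG x i (Suc j) v = Dbwd F G DG x (i - 1) j (blinfun_apply (DG (orb F G x i)) v)"
  by (induction j) (simp_all add: diff_diff_eq)

lemma Xsp_norm_bound: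
  assumes "\<eta> \<in> Xsp n"
  shows "norm (\<eta> i) \<le> wnorm n \<eta> * exp (1 / real n * \<bar>real_of_int i\<bar>)"
proof -
  have "exp (- \<bar>real_of_int i\<bar> / real n) * norm (\<eta> i) \<le> wnorm n \<eta>"
    unfolding wnorm_def using assms unfolding Xsp_def by (intro cSUP_upper) auto
  then show ?thesis by (simp add: exp_minus field_simps)
qed

lemma Xsp_wnorm_le:
  assumes "\<And>k. norm (\<zeta> k) \<le> K * exp (\<bar>real_of_int k\<bar> / real m)"
  shows "\<zeta> \<in> Xsp m" and "wnorm m \<zeta> \<le> K"
proof -
  have weighted: "exp (- \<bar>real_of_int k\<bar> / real m) * norm (\<zeta> k) \<le> K" for k
    using assms[of k] by (simp add: exp_minus field_simps)
  then show "\<zeta> \<in> Xsp m" unfolding Xsp_def by (intro CollectI bdd_aboveI2[where M = K]) simp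
  show "wnorm m \<zeta> \<le> K" unfolding wnorm_def using weighted by (auto intro: cSUP_least)
qed

lemma geometric_dominated:
  fixes f :: "nat \<Rightarrow> 'b::banach"
  assumes bound: "\<And>j. norm (f j) \<le> K * r ^ j" and "0 \<le> r" "r < 1"
  shows "summable f" and "f \<longlonglongrightarrow> 0" and "norm (suminf f) \<le> K / (1 - r)"
proof -
  have geo: "(\<lambda>j. K * r ^ j) sums (K / (1 - r))"
    using sums_mult[OF geometric_sums, of r K] assms(2,3) by simp
  show "summable f"
    using summable_comparison_test[OF _ sums_summable[OF geo]] bound by blast
  have "(\<lambda>j. K * r ^ j) \<longlonglongrightarrow> 0"
    using assms(2,3) by (intro tendsto_mult_right_zero LIMSEQ_power_zero) simp
  then show "f \<longlonglongrightarrow> 0"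
    using Lim_null_comparison[of f "\<lambda>j. K * r ^ j"] bound by (simp add: always_eventually)
  show "norm (suminf f) \<le> K / (1 - r)"
    using norm_suminf_le[OF bound sums_summable[OF geo]] sums_unique[OF geo] by simp
qed

(* The abstract setting: an invariant splitting E^s + E^u along the orbit whose hyperbolic
   estimates hold with a fixed exponent eps and constant c >= 1.  Regular hyperbolicity
   provides this for every small eps (lemma regularly_hyperbolic_tempered_splitting). *)
locale tempered_splitting =
  fixes F G :: "'a \<Rightarrow> 'a" and DF DG :: "'a \<Rightarrow> ('b::banach) \<Rightarrow>\<^sub>L 'b" and x :: 'a
    and lam eps c :: real and Es Eu :: "int \<Rightarrow> 'b set"
  assumes DG_DF: "\<And>k v. blinfun_apply (DG (orb F G x k)) (blinfun_apply (DF (orb F G x (k - 1))) v) = v"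
    and DF_DG: "\<And>k v. blinfun_apply (DF (orb F G x (k - 1))) (blinfun_apply (DG (orb F G x k)) v) = v"
    and subspace_Es: "\<And>k. subspace (Es k)" and subspace_Eu: "\<And>k. subspace (Eu k)"
    and Es_Eu_inter: "\<And>k. Es k \<inter> Eu k = {0}"
    and Es_Eu_sum: "\<And>k v. \<exists>a b. a \<in> Es k \<and> b \<in> Eu k \<and> v = a + b"
    and DF_Es: "\<And>k v. v \<in> Es k \<Longrightarrow> blinfun_apply (DF (orb F G x k)) v \<in> Es (k + 1)"
    and DF_Eu: "\<And>k v. v \<in> Eu k \<Longrightarrow> blinfun_apply (DF (orb F G x k)) v \<in> Eu (k + 1)"
    and lam_pos: "0 < lam" and eps_nonneg: "0 \<le> eps" and c_ge_1: "1 \<le> c"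
    and Dfwd_Es_bound: "\<And>k j v. 0 < j \<Longrightarrow> v \<in> Es k \<Longrightarrow>
          norm (Dfwd F G DF x k j v) \<le> c * lam ^ j * exp (eps * \<bar>real_of_int k\<bar>) * norm v"
    and Dbwd_Eu_bound: "\<And>k j v. 0 < j \<Longrightarrow> v \<in> Eu k \<Longrightarrow>
          norm (Dbwd F G DG x k j v) \<le> c * lam ^ j * exp (eps * \<bar>real_of_int k\<bar>) * norm v"
    and splitting_bound: "\<And>k a b. a \<in> Es k \<Longrightarrow> b \<in> Eu k \<Longrightarrow>
          norm a \<le> c * exp (eps * \<bar>real_of_int k\<bar>) * norm (a + b) \<and>
          norm b \<le> c * exp (eps * \<bar>real_of_int k\<bar>) * norm (a + b)"
begin

abbreviation "A k \<equiv> blinfun_apply (DF (orb F G x k))"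
abbreviation "fwd \<equiv> Dfwd F G DF x"
abbreviation "bwd \<equiv> Dbwd F G DG x"

definition proj_s :: "int \<Rightarrow> 'b \<Rightarrow> 'b" where
  "proj_s k v = (THE s. s \<in> Es k \<and> v - s \<in> Eu k)"

definition proj_u :: "int \<Rightarrow> 'b \<Rightarrow> 'b" where
  "proj_u k v = v - proj_s k v"

lemma splitting_unique:
  assumes "s \<in> Es k" "v - s \<in> Eu k" "s' \<in> Es k" "v - s' \<in> Eu k"
  shows "s = s'"
proof -
  have "s - s' \<in> Es k" using assms subspace_Es subspace_diff by blast
  moreover have "s - s' \<in> Eu k"
    using subspace_diff[OF subspace_Eu assms(4,2)] by simp
  ultimately have "s - s' \<in> {0}" using Es_Eu_inter by blast
  then show ?thesis by simp
qed

lemma proj_s_spec: "proj_s k v \<in> Es k \<and> v - proj_s k v \<in> Eu k"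
proof -
  obtain a b where "a \<in> Es k" "b \<in> Eu k" "v = a + b" using Es_Eu_sum by blast
  then have a: "a \<in> Es k \<and> v - a \<in> Eu k" by simp
  show ?thesis unfolding proj_s_def by (rule theI[of _ a]) (use a splitting_unique[of _ k v a] in blast)+
qed

lemma proj_s_eq: "s \<in> Es k \<Longrightarrow> v - s \<in> Eu k \<Longrightarrow> proj_s k v = s"
  using proj_s_spec splitting_unique by blast

lemma proj_s_in: "proj_s k v \<in> Es k" and proj_u_in: "proj_u k v \<in> Eu k"
  using proj_s_spec unfolding proj_u_def by auto

(* Uniqueness of the decomposition makes the projections linear. *)
lemma linear_proj_s: "linear (proj_s k)"
proof (rule linearI)
  show "proj_s k (v + w) = proj_s k v + proj_s k w" for v w
  proof (rule proj_s_eq)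
    show "proj_s k v + proj_s k w \<in> Es k" using proj_s_in subspace_Es subspace_add by blast
    have "v + w - (proj_s k v + proj_s k w) = proj_u k v + proj_u k w" unfolding proj_u_def by simp
    then show "v + w - (proj_s k v + proj_s k w) \<in> Eu k" using proj_u_in subspace_Eu subspace_add by metis
  qed
  show "proj_s k (a *\<^sub>R v) = a *\<^sub>R proj_s k v" for a v
  proof (rule proj_s_eq)
    show "a *\<^sub>R proj_s k v \<in> Es k" using proj_s_in subspace_Es subspace_scale by blast
    have "a *\<^sub>R v - a *\<^sub>R proj_s k v = a *\<^sub>R proj_u k v" unfolding proj_u_def by (simp add: scaleR_diff_right)
    then show "a *\<^sub>R v - a *\<^sub>R proj_s k v \<in> Eu k" using proj_u_in subspace_Eu subspace_scale by metis
  qed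
qed

lemma linear_proj_u: "linear (proj_u k)"
  using linear_proj_s[of k] unfolding proj_u_def linear_iff by (simp add: algebra_simps)

(* The projections commute with the derivative along the orbit, by invariance of the splitting. *)
lemma proj_s_DF: "proj_s k (A (k - 1) v) = A (k - 1) (proj_s (k - 1) v)"
proof (rule proj_s_eq)
  show "A (k - 1) (proj_s (k - 1) v) \<in> Es k" using DF_Es[OF proj_s_in, of "k - 1" v] by simp
  have "A (k - 1) v - A (k - 1) (proj_s (k - 1) v) = A (k - 1) (proj_u (k - 1) v)"
    unfolding proj_u_def by (simp add: blinfun.diff_right)
  then show "A (k - 1) v - A (k - 1) (proj_s (k - 1) v) \<in> Eu k"
    using DF_Eu[OF proj_u_in, of "k - 1" v] by simp
qed

lemma proj_u_DF: "proj_u k (A (k - 1) v) = A (k - 1) (proj_u (k - 1) v)"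
  unfolding proj_u_def proj_s_DF by (simp add: blinfun.diff_right)

lemma proj_s_bound: "norm (proj_s k v) \<le> c * exp (eps * \<bar>real_of_int k\<bar>) * norm v"
  and proj_u_bound: "norm (proj_u k v) \<le> c * exp (eps * \<bar>real_of_int k\<bar>) * norm v"
proof -
  have "proj_s k v + proj_u k v = v" unfolding proj_u_def by simp
  then show "norm (proj_s k v) \<le> c * exp (eps * \<bar>real_of_int k\<bar>) * norm v"
    and "norm (proj_u k v) \<le> c * exp (eps * \<bar>real_of_int k\<bar>) * norm v"
    using splitting_bound[OF proj_s_in[of k v] proj_u_in[of k v]] by simp_all
qed

(* The hyperbolic estimates extend to j = 0, since c >= 1. *)
lemma norm_le_unit_bound: "norm u \<le> c * exp (eps * \<bar>real_of_int i\<bar>) * norm u"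
proof -
  have "1 \<le> exp (eps * \<bar>real_of_int i\<bar>)" using eps_nonneg by simp
  then have "1 * 1 \<le> c * exp (eps * \<bar>real_of_int i\<bar>)" using c_ge_1 by (intro mult_mono) auto
  then show ?thesis using mult_right_mono[of 1 _ "norm u"] by simp
qed

lemma fwd_bound:
  assumes "v \<in> Es i"
  shows "norm (fwd i j v) \<le> c * lam ^ j * exp (eps * \<bar>real_of_int i\<bar>) * norm v"
proof (cases j)
  case 0
  then show ?thesis using norm_le_unit_bound[of v i] by simp
next
  case (Suc j')
  then have "0 < j" by simp
  then show ?thesis by (rule Dfwd_Es_bound[OF _ assms])
qed

lemma bwd_bound:
  assumes "w \<in> Eu i"
  shows "norm (bwd i j w) \<le> c * lam ^ j * exp (eps * \<bar>real_of_int i\<bar>) * norm w"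
proof (cases j)
  case 0
  then show ?thesis using norm_le_unit_bound[of w i] by simp
next
  case (Suc j')
  then have "0 < j" by simp
  then show ?thesis by (rule Dbwd_Eu_bound[OF _ assms])
qed

lemma bwd_DF: "bwd i (Suc j) (A (i - 1) w) = bwd (i - 1) j w"
  by (simp only: Dbwd_Suc_shift DG_DF)

definition stable_term :: "(int \<Rightarrow> 'b) \<Rightarrow> int \<Rightarrow> nat \<Rightarrow> 'b" where
  "stable_term \<eta> k j = fwd (k - int j) j (proj_s (k - int j) (\<eta> (k - int j)))"

definition unstable_term :: "(int \<Rightarrow> 'b) \<Rightarrow> int \<Rightarrow> nat \<Rightarrow> 'b" where
  "unstable_term \<eta> k j = bwd (k + int j) j (proj_u (k + int j) (\<eta> (k + int j)))"

definition green :: "(int \<Rightarrow> 'b) \<Rightarrow> int \<Rightarrow> 'b" where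
  "green \<eta> k = (\<Sum>j. stable_term \<eta> k j) - (\<Sum>j. unstable_term \<eta> k (Suc j))"

lemma stable_term_0: "stable_term \<eta> k 0 = proj_s k (\<eta> k)"
  and unstable_term_0: "unstable_term \<eta> k 0 = proj_u k (\<eta> k)"
  by (simp_all add: stable_term_def unstable_term_def)

lemma stable_term_step: "A (k - 1) (stable_term \<eta> (k - 1) j) = stable_term \<eta> k (Suc j)"
proof -
  have "k - int (Suc j) = k - 1 - int j" by simp
  then show ?thesis unfolding stable_term_def by (simp add: algebra_simps)
qed

lemma unstable_term_step: "A (k - 1) (unstable_term \<eta> (k - 1) (Suc j)) = unstable_term \<eta> k j"
proof -
  have "k - 1 + int (Suc j) = k + int j" by simp
  then show ?thesis unfolding unstable_term_def using DF_DG[of k] by simp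
qed

lemma stable_term_Gamma:
  "stable_term (Gamma F G DF x \<eta>) k j = stable_term \<eta> k j - stable_term \<eta> k (Suc j)"
proof -
  define i where "i = k - int j"
  have prev: "k - int (Suc j) = i - 1" unfolding i_def by simp
  have "stable_term (Gamma F G DF x \<eta>) k j
      = fwd i j (proj_s i (\<eta> i) - A (i - 1) (proj_s (i - 1) (\<eta> (i - 1))))"
    unfolding stable_term_def i_def[symmetric] Gamma_def linear_diff[OF linear_proj_s] proj_s_DF ..
  also have "\<dots> = fwd i j (proj_s i (\<eta> i)) - fwd (i - 1) (Suc j) (proj_s (i - 1) (\<eta> (i - 1)))"
    unfolding linear_diff[OF linear_Dfwd] Dfwd_Suc_shift ..
  finally show ?thesis unfolding stable_term_def prev i_def .
qed

lemma unstable_term_Gamma: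
  "unstable_term (Gamma F G DF x \<eta>) k (Suc j) = unstable_term \<eta> k (Suc j) - unstable_term \<eta> k j"
proof -
  define i where "i = k + int (Suc j)"
  have prev: "k + int j = i - 1" unfolding i_def by simp
  have "unstable_term (Gamma F G DF x \<eta>) k (Suc j)
      = bwd i (Suc j) (proj_u i (\<eta> i) - A (i - 1) (proj_u (i - 1) (\<eta> (i - 1))))"
    unfolding unstable_term_def i_def[symmetric] Gamma_def linear_diff[OF linear_proj_u] proj_u_DF ..
  also have "\<dots> = bwd i (Suc j) (proj_u i (\<eta> i)) - bwd (i - 1) j (proj_u (i - 1) (\<eta> (i - 1)))"
    unfolding linear_diff[OF linear_Dbwd] bwd_DF ..
  finally show ?thesis unfolding unstable_term_def prev i_def .
qed

lemma stable_term_add: "stable_term (\<lambda>i. \<eta> i + \<zeta> i) k j = stable_term \<eta> k j + stable_term \<zeta> k j"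
  unfolding stable_term_def linear_add[OF linear_proj_s] linear_add[OF linear_Dfwd] ..

lemma unstable_term_add: "unstable_term (\<lambda>i. \<eta> i + \<zeta> i) k j = unstable_term \<eta> k j + unstable_term \<zeta> k j"
  unfolding unstable_term_def linear_add[OF linear_proj_u] linear_add[OF linear_Dbwd] ..

lemma stable_term_scale: "stable_term (\<lambda>i. a *\<^sub>R \<eta> i) k j = a *\<^sub>R stable_term \<eta> k j"
  unfolding stable_term_def linear_cmul[OF linear_proj_s] linear_cmul[OF linear_Dfwd] ..

lemma unstable_term_scale: "unstable_term (\<lambda>i. a *\<^sub>R \<eta> i) k j = a *\<^sub>R unstable_term \<eta> k j"
  unfolding unstable_term_def linear_cmul[OF linear_proj_u] linear_cmul[OF linear_Dbwd] ..

end

(* The Green operator on sequences of exponential growth rate b: as long as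
   lam e^{2 eps + b} < 1 its defining series converge geometrically. *)
locale tempered_splitting_rate = tempered_splitting +
  fixes b :: real
  assumes rate_nonneg: "0 \<le> b" and contraction: "lam * exp (2 * eps + b) < 1"
begin

definition growth :: real where "growth = 2 * eps + b"
definition ratio :: real where "ratio = lam * exp growth"

lemma growth_nonneg: "0 \<le> growth"
  using eps_nonneg rate_nonneg unfolding growth_def by simp

lemma ratio_nonneg: "0 \<le> ratio"
  using lam_pos unfolding ratio_def by simp

lemma ratio_lt_1: "ratio < 1"
  using contraction unfolding ratio_def growth_def .

definition tempered :: "(int \<Rightarrow> 'b) \<Rightarrow> bool" where
  "tempered \<eta> \<longleftrightarrow> (\<exists>W. \<forall>i. norm (\<eta> i) \<le> W * exp (b * \<bar>real_of_int i\<bar>))"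

lemma propagated_bound:
  fixes u v w W t s :: real
  assumes u: "u \<le> c * lam ^ j * exp (eps * t) * v" and v: "v \<le> c * exp (eps * t) * w"
    and w: "w \<le> W * exp (b * t)" and "0 \<le> w" and t: "t \<le> s + real j"
  shows "u \<le> c\<^sup>2 * W * exp (growth * s) * ratio ^ j"
proof -
  have W: "0 \<le> W" using w \<open>0 \<le> w\<close> by (metis exp_gt_zero order_trans zero_le_mult_iff not_le)
  have "v \<le> c * exp (eps * t) * (W * exp (b * t))"
    using order_trans[OF v mult_left_mono[OF w]] c_ge_1 by simp
  then have "u \<le> c * lam ^ j * exp (eps * t) * (c * exp (eps * t) * (W * exp (b * t)))"
    using order_trans[OF u mult_left_mono] c_ge_1 lam_pos by simp
  also have "\<dots> = c\<^sup>2 * W * lam ^ j * (exp (eps * t) * exp (eps * t) * exp (b * t))"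
    by (simp add: power2_eq_square mult_ac)
  also have "exp (eps * t) * exp (eps * t) * exp (b * t) = exp (growth * t)"
    unfolding growth_def exp_add[symmetric] by (simp add: algebra_simps)
  also have "c\<^sup>2 * W * lam ^ j * exp (growth * t) \<le> c\<^sup>2 * W * lam ^ j * (exp (growth * s) * exp growth ^ j)"
  proof (rule mult_left_mono)
    have "growth * t \<le> growth * (s + real j)" using t growth_nonneg by (rule mult_left_mono)
    then have "exp (growth * t) \<le> exp (growth * (s + real j))" by simp
    also have "\<dots> = exp (growth * s) * exp growth ^ j"
      unfolding distrib_left exp_add exp_of_nat2_mult ..
    finally show "exp (growth * t) \<le> exp (growth * s) * exp growth ^ j" .
    show "0 \<le> c\<^sup>2 * W * lam ^ j" using W lam_pos by simp
  qed
  also have "\<dots> = c\<^sup>2 * W * exp (growth * s) * ratio ^ j"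
    by (simp add: ratio_def power_mult_distrib mult_ac)
  finally show ?thesis .
qed

context
  fixes \<eta> :: "int \<Rightarrow> 'b" and W :: real
  assumes \<eta>_bound: "\<And>i. norm (\<eta> i) \<le> W * exp (b * \<bar>real_of_int i\<bar>)"
begin

lemma W_nonneg: "0 \<le> W"
proof -
  have "norm (\<eta> 0) \<le> W" using \<eta>_bound[of 0] by simp
  then show ?thesis using norm_ge_zero order_trans by blast
qed

lemma stable_term_bound:
  "norm (stable_term \<eta> k j) \<le> c\<^sup>2 * W * exp (growth * \<bar>real_of_int k\<bar>) * ratio ^ j"
  unfolding stable_term_def
  by (rule propagated_bound[OF fwd_bound[OF proj_s_in] proj_s_bound \<eta>_bound norm_ge_zero]) arith

lemma unstable_term_bound:
  "norm (unstable_term \<eta> k j) \<le> c\<^sup>2 * W * exp (growth * \<bar>real_of_int k\<bar>) * ratio ^ j"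
  unfolding unstable_term_def
  by (rule propagated_bound[OF bwd_bound[OF proj_u_in] proj_u_bound \<eta>_bound norm_ge_zero]) arith

lemma stable_summable: "summable (stable_term \<eta> k)"
  and stable_tendsto: "stable_term \<eta> k \<longlonglongrightarrow> 0"
  and stable_sum_bound:
    "norm (\<Sum>j. stable_term \<eta> k j) \<le> c\<^sup>2 * W * exp (growth * \<bar>real_of_int k\<bar>) / (1 - ratio)"
  using geometric_dominated[OF stable_term_bound ratio_nonneg ratio_lt_1] by simp_all

lemma unstable_summable: "summable (unstable_term \<eta> k)"
  and unstable_tendsto: "unstable_term \<eta> k \<longlonglongrightarrow> 0"
  using geometric_dominated[OF unstable_term_bound ratio_nonneg ratio_lt_1] by simp_all

lemma unstable_tail_bound:
  "norm (\<Sum>j. unstable_term \<eta> k (Suc j)) \<le> c\<^sup>2 * W * exp (growth * \<bar>real_of_int k\<bar>) / (1 - ratio)"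
proof (rule geometric_dominated(3)[OF _ ratio_nonneg ratio_lt_1])
  fix j
  have "ratio ^ Suc j \<le> ratio ^ j"
    using mult_left_le_one_le[of "ratio ^ j" ratio] ratio_nonneg ratio_lt_1 by simp
  then show "norm (unstable_term \<eta> k (Suc j)) \<le> c\<^sup>2 * W * exp (growth * \<bar>real_of_int k\<bar>) * ratio ^ j"
    using order_trans[OF unstable_term_bound mult_left_mono] W_nonneg by simp
qed

lemma green_bound:
  "norm (green \<eta> k) \<le> 2 * c\<^sup>2 / (1 - ratio) * W * exp (growth * \<bar>real_of_int k\<bar>)"
proof -
  have "norm (green \<eta> k) \<le> norm (\<Sum>j. stable_term \<eta> k j) + norm (\<Sum>j. unstable_term \<eta> k (Suc j))"
    unfolding green_def by (rule norm_triangle_ineq4)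
  also have "\<dots> \<le> c\<^sup>2 * W * exp (growth * \<bar>real_of_int k\<bar>) / (1 - ratio)
      + c\<^sup>2 * W * exp (growth * \<bar>real_of_int k\<bar>) / (1 - ratio)"
    by (rule add_mono[OF stable_sum_bound unstable_tail_bound])
  also have "\<dots> = 2 * c\<^sup>2 / (1 - ratio) * W * exp (growth * \<bar>real_of_int k\<bar>)"
    by (simp add: field_simps)
  finally show ?thesis .
qed

lemma green_Xsp:
  assumes "growth \<le> 1 / real m"
  shows "green \<eta> \<in> Xsp m" and "wnorm m (green \<eta>) \<le> 2 * c\<^sup>2 / (1 - ratio) * W"
proof -
  have "norm (green \<eta> k) \<le> 2 * c\<^sup>2 / (1 - ratio) * W * exp (\<bar>real_of_int k\<bar> / real m)" for k
  proof -
    have "growth * \<bar>real_of_int k\<bar> \<le> \<bar>real_of_int k\<bar> / real m"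
      using mult_right_mono[OF assms, of "\<bar>real_of_int k\<bar>"] by simp
    then have "exp (growth * \<bar>real_of_int k\<bar>) \<le> exp (\<bar>real_of_int k\<bar> / real m)" by simp
    then show ?thesis
      using order_trans[OF green_bound mult_left_mono] W_nonneg ratio_lt_1 by simp
  qed
  then show "green \<eta> \<in> Xsp m" and "wnorm m (green \<eta>) \<le> 2 * c\<^sup>2 / (1 - ratio) * W"
    by (rule Xsp_wnorm_le)+
qed

end

(* On tempered sequences all series converge, so the Green operator is linear. *)
lemma green_add:
  assumes "tempered \<eta>" "tempered \<zeta>"
  shows "green (\<lambda>i. \<eta> i + \<zeta> i) = (\<lambda>i. green \<eta> i + green \<zeta> i)"
proof
  fix k
  obtain V W where "\<And>i. norm (\<eta> i) \<le> V * exp (b * \<bar>real_of_int i\<bar>)"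
    and "\<And>i. norm (\<zeta> i) \<le> W * exp (b * \<bar>real_of_int i\<bar>)"
    using assms unfolding tempered_def by blast
  then have s: "summable (stable_term \<eta> k)" "summable (stable_term \<zeta> k)"
    and u: "summable (\<lambda>j. unstable_term \<eta> k (Suc j))" "summable (\<lambda>j. unstable_term \<zeta> k (Suc j))"
    using stable_summable unstable_summable summable_Suc_iff by blast+
  show "green (\<lambda>i. \<eta> i + \<zeta> i) k = green \<eta> k + green \<zeta> k"
    unfolding green_def stable_term_add unstable_term_add suminf_add[OF s, symmetric]
      suminf_add[OF u, symmetric] by simp
qed

lemma green_scale:
  assumes "tempered \<eta>"
  shows "green (\<lambda>i. a *\<^sub>R \<eta> i) = (\<lambda>i. a *\<^sub>R green \<eta> i)"
proof
  fix k
  obtain W where "\<And>i. norm (\<eta> i) \<le> W * exp (b * \<bar>real_of_int i\<bar>)"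
    using assms unfolding tempered_def by blast
  then have "summable (stable_term \<eta> k)" "summable (\<lambda>j. unstable_term \<eta> k (Suc j))"
    using stable_summable unstable_summable summable_Suc_iff by blast+
  then show "green (\<lambda>i. a *\<^sub>R \<eta> i) k = a *\<^sub>R green \<eta> k"
    unfolding green_def stable_term_scale unstable_term_scale
    by (simp add: suminf_scaleR_right scaleR_diff_right)
qed

(* Gamma (green eta) = eta: applying Df(x_{k-1}) to the sums at k-1 reproduces the sums at k,
   up to the head terms P^s eta_k and P^u eta_k. *)
lemma Gamma_green:
  assumes "tempered \<eta>"
  shows "Gamma F G DF x (green \<eta>) = \<eta>"
proof
  fix k
  obtain W where bound: "\<And>i. norm (\<eta> i) \<le> W * exp (b * \<bar>real_of_int i\<bar>)"
    using assms unfolding tempered_def by blast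
  have lin: "bounded_linear (A (k - 1))" by (rule blinfun.bounded_linear_right)
  have stable: "A (k - 1) (\<Sum>j. stable_term \<eta> (k - 1) j) = (\<Sum>j. stable_term \<eta> k j) - proj_s k (\<eta> k)"
  proof -
    have "A (k - 1) (\<Sum>j. stable_term \<eta> (k - 1) j) = (\<Sum>j. stable_term \<eta> k (Suc j))"
      using bounded_linear.suminf[OF lin stable_summable[OF bound]] by (simp add: stable_term_step)
    also have "\<dots> = (\<Sum>j. stable_term \<eta> k j) - proj_s k (\<eta> k)"
      using suminf_split_head[OF stable_summable[OF bound]] by (simp add: stable_term_0)
    finally show ?thesis .
  qed
  have unstable: "A (k - 1) (\<Sum>j. unstable_term \<eta> (k - 1) (Suc j))
      = proj_u k (\<eta> k) + (\<Sum>j. unstable_term \<eta> k (Suc j))"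
  proof -
    have "summable (\<lambda>j. unstable_term \<eta> (k - 1) (Suc j))"
      using unstable_summable[OF bound] summable_Suc_iff by blast
    then have "A (k - 1) (\<Sum>j. unstable_term \<eta> (k - 1) (Suc j)) = (\<Sum>j. unstable_term \<eta> k j)"
      using bounded_linear.suminf[OF lin] by (simp add: unstable_term_step)
    also have "\<dots> = proj_u k (\<eta> k) + (\<Sum>j. unstable_term \<eta> k (Suc j))"
      using suminf_split_head[OF unstable_summable[OF bound]] by (simp add: unstable_term_0)
    finally show ?thesis .
  qed
  have "Gamma F G DF x (green \<eta>) k = green \<eta> k - A (k - 1) (green \<eta> (k - 1))"
    by (simp add: Gamma_def)
  also have "\<dots> = proj_s k (\<eta> k) + proj_u k (\<eta> k)"
    unfolding green_def blinfun.diff_right stable unstable by simp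
  also have "\<dots> = \<eta> k" by (simp add: proj_u_def)
  finally show "Gamma F G DF x (green \<eta>) k = \<eta> k" .
qed

(* green (Gamma eta) = eta: both series telescope. *)
lemma green_Gamma:
  assumes "tempered \<eta>"
  shows "green (Gamma F G DF x \<eta>) = \<eta>"
proof
  fix k
  obtain W where bound: "\<And>i. norm (\<eta> i) \<le> W * exp (b * \<bar>real_of_int i\<bar>)"
    using assms unfolding tempered_def by blast
  have "stable_term (Gamma F G DF x \<eta>) k = (\<lambda>j. stable_term \<eta> k j - stable_term \<eta> k (Suc j))"
    by (intro ext stable_term_Gamma)
  then have stable: "stable_term (Gamma F G DF x \<eta>) k sums (proj_s k (\<eta> k) - 0)"
    using telescope_sums'[OF stable_tendsto[OF bound]] by (simp add: stable_term_0)
  have "(\<lambda>j. unstable_term (Gamma F G DF x \<eta>) k (Suc j))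
      = (\<lambda>j. unstable_term \<eta> k (Suc j) - unstable_term \<eta> k j)"
    by (intro ext unstable_term_Gamma)
  then have unstable: "(\<lambda>j. unstable_term (Gamma F G DF x \<eta>) k (Suc j)) sums (0 - proj_u k (\<eta> k))"
    using telescope_sums[OF unstable_tendsto[OF bound]] by (simp add: unstable_term_0)
  show "green (Gamma F G DF x \<eta>) k = \<eta> k"
    unfolding green_def sums_unique[OF stable, symmetric] sums_unique[OF unstable, symmetric]
    by (simp add: proj_u_def)
qed

end

lemma regularly_hyperbolic_tempered_splitting:
  fixes F G :: "real^'d \<Rightarrow> real^'d" and DF DG :: "real^'d \<Rightarrow> (real^'d) \<Rightarrow>\<^sub>L (real^'d)"
  assumes diffeo: "torus_C1_diffeo F G DF DG" and hyp: "regularly_hyperbolic F G DF DG lam x"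
  obtains e0 where "0 < e0"
    and "\<And>eps. 0 < eps \<Longrightarrow> eps < e0 \<Longrightarrow> \<exists>c Es Eu. tempered_splitting F G DF DG x lam eps c Es Eu"
proof -
  obtain Es Eu :: "int \<Rightarrow> (real^'d) set" and e0 :: real where
    splitting: "\<forall>k. subspace (Es k) \<and> subspace (Eu k) \<and> Es k \<inter> Eu k = {0} \<and>
      {a + b | a b. a \<in> Es k \<and> b \<in> Eu k} = UNIV"
    and inv_s: "\<forall>k. blinfun_apply (DF (orb F G x k)) ` Es k = Es (k + 1)"
    and inv_u: "\<forall>k. blinfun_apply (DF (orb F G x k)) ` Eu k = Eu (k + 1)"
    and "0 < e0" and estimates: "\<forall>\<epsilon>. 0 < \<epsilon> \<and> \<epsilon> < e0 \<longrightarrow> (\<exists>c. \<forall>k::int.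
      (\<forall>j>0. \<forall>\<eta>\<in>Es k. norm (Dfwd F G DF x k j \<eta>) \<le> c * lam ^ j * exp (\<epsilon> * \<bar>real_of_int k\<bar>) * norm \<eta>) \<and>
      (\<forall>j>0. \<forall>\<eta>\<in>Eu k. norm (Dbwd F G DG x k j \<eta>) \<le> c * lam ^ j * exp (\<epsilon> * \<bar>real_of_int k\<bar>) * norm \<eta>) \<and>
      (\<forall>\<eta> \<eta>s \<eta>u. \<eta>s \<in> Es k \<longrightarrow> \<eta>u \<in> Eu k \<longrightarrow> \<eta> = \<eta>s + \<eta>u \<longrightarrow>
          norm \<eta>s \<le> c * exp (\<epsilon> * \<bar>real_of_int k\<bar>) * norm \<eta> \<and>
          norm \<eta>u \<le> c * exp (\<epsilon> * \<bar>real_of_int k\<bar>) * norm \<eta>))"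
    and "0 < lam"
    using hyp unfolding regularly_hyperbolic_def by (elim exE conjE) (rule that)
  show ?thesis
  proof (rule that[OF \<open>0 < e0\<close>])
    fix eps :: real assume "0 < eps" "eps < e0"
    then obtain c where est: "\<forall>k::int.
      (\<forall>j>0. \<forall>\<eta>\<in>Es k. norm (Dfwd F G DF x k j \<eta>) \<le> c * lam ^ j * exp (eps * \<bar>real_of_int k\<bar>) * norm \<eta>) \<and>
      (\<forall>j>0. \<forall>\<eta>\<in>Eu k. norm (Dbwd F G DG x k j \<eta>) \<le> c * lam ^ j * exp (eps * \<bar>real_of_int k\<bar>) * norm \<eta>) \<and>
      (\<forall>\<eta> \<eta>s \<eta>u. \<eta>s \<in> Es k \<longrightarrow> \<eta>u \<in> Eu k \<longrightarrow> \<eta> = \<eta>s + \<eta>u \<longrightarrow>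
          norm \<eta>s \<le> c * exp (eps * \<bar>real_of_int k\<bar>) * norm \<eta> \<and>
          norm \<eta>u \<le> c * exp (eps * \<bar>real_of_int k\<bar>) * norm \<eta>)"
      using estimates by blast
    define c' where "c' = max 1 c"
    have enlarge: "y \<le> c * X \<Longrightarrow> 0 \<le> X \<Longrightarrow> y \<le> c' * X" for y X :: real
      using mult_right_mono[of c c' X] unfolding c'_def by linarith
    have "tempered_splitting F G DF DG x lam eps c' Es Eu"
    proof
      show "blinfun_apply (DG (orb F G x k)) (blinfun_apply (DF (orb F G x (k - 1))) v) = v"
        and "blinfun_apply (DF (orb F G x (k - 1))) (blinfun_apply (DG (orb F G x k)) v) = v" for k v
        using torus_derivative_inverse[OF diffeo] by blast+
      show "subspace (Es k)" "subspace (Eu k)" "Es k \<inter> Eu k = {0}"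
        and "\<exists>a b. a \<in> Es k \<and> b \<in> Eu k \<and> v = a + b" for k v
        using splitting by blast+
      show "blinfun_apply (DF (orb F G x k)) v \<in> Es (k + 1)" if "v \<in> Es k" for k v
        using inv_s that by blast
      show "blinfun_apply (DF (orb F G x k)) v \<in> Eu (k + 1)" if "v \<in> Eu k" for k v
        using inv_u that by blast
      show "0 < lam" "0 \<le> eps" "1 \<le> c'"
        using \<open>0 < lam\<close> \<open>0 < eps\<close> unfolding c'_def by auto
      show "norm (Dfwd F G DF x k j v) \<le> c' * lam ^ j * exp (eps * \<bar>real_of_int k\<bar>) * norm v"
        if "0 < j" "v \<in> Es k" for k j v
        using enlarge[of _ "lam ^ j * exp (eps * \<bar>real_of_int k\<bar>) * norm v"] est that \<open>0 < lam\<close>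
        by (simp add: mult.assoc)
      show "norm (Dbwd F G DG x k j v) \<le> c' * lam ^ j * exp (eps * \<bar>real_of_int k\<bar>) * norm v"
        if "0 < j" "v \<in> Eu k" for k j v
        using enlarge[of _ "lam ^ j * exp (eps * \<bar>real_of_int k\<bar>) * norm v"] est that \<open>0 < lam\<close>
        by (simp add: mult.assoc)
      show "norm a \<le> c' * exp (eps * \<bar>real_of_int k\<bar>) * norm (a + b) \<and>
          norm b \<le> c' * exp (eps * \<bar>real_of_int k\<bar>) * norm (a + b)"
        if "a \<in> Es k" "b \<in> Eu k" for k a b
        using enlarge[of _ "exp (eps * \<bar>real_of_int k\<bar>) * norm (a + b)"] est that
        by (simp add: mult.assoc)
    qed
    then show "\<exists>c Es Eu. tempered_splitting F G DF DG x lam eps c Es Eu" by blast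
  qed
qed

lemma small_epsilon:
  fixes lam e0 :: real and n m :: nat
  assumes "0 < lam" "lam < 1" "0 < e0" "0 < m" "m < n" "real n > 1 / ln (1 / lam)"
  obtains eps where "0 < eps" "eps < e0" "lam * exp (2 * eps + 1 / real n) < 1"
    and "2 * eps + 1 / real n \<le> 1 / real m"
proof -
  define L where "L = ln (1 / lam)"
  have "0 < L" unfolding L_def using assms(1,2) by simp
  have "0 < real n" using assms(5) by simp
  have "1 < real n * L" using assms(6) \<open>0 < L\<close> unfolding L_def[symmetric] by (simp add: field_simps)
  then have "1 / real n < L" using \<open>0 < real n\<close> by (simp add: field_simps)
  have "1 / real n < 1 / real m" using assms(4,5) by (simp add: frac_less2)
  define a q where "a = 1 / real n" and "q = 1 / real m"
  define eps where "eps = min (e0 / 2) (min ((L - a) / 4) ((q - a) / 4))"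
  have eps_le: "eps \<le> e0 / 2" "eps \<le> (L - a) / 4" "eps \<le> (q - a) / 4"
    unfolding eps_def by (meson min.cobounded1 min.cobounded2 order_trans)+
  have "a < L" "a < q" unfolding a_def q_def by fact+
  have "0 < eps" unfolding eps_def using \<open>0 < e0\<close> \<open>a < L\<close> \<open>a < q\<close> by simp
  moreover have "eps < e0" using eps_le(1) \<open>0 < e0\<close> by linarith
  moreover have "2 * eps + a \<le> q" using eps_le(3) \<open>a < q\<close> by (simp add: field_simps)
  moreover have "lam * exp (2 * eps + a) < 1"
  proof -
    have "exp (2 * eps + a) < exp L" using eps_le(2) \<open>a < L\<close> by (simp add: field_simps)
    also have "exp L = 1 / lam" unfolding L_def using assms(1) by simp
    finally show ?thesis using assms(1) by (simp add: field_simps)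
  qed
  ultimately show ?thesis using that unfolding a_def q_def by blast
qed

theorem lemma3p6:
  fixes F G :: "real^'d \<Rightarrow> real^'d"
    and DF DG :: "real^'d \<Rightarrow> (real^'d) \<Rightarrow>\<^sub>L (real^'d)"
    and x :: "real^'d" and lam :: real and n m :: nat
  assumes "torus_C1_diffeo F G DF DG"
    and "regularly_hyperbolic F G DF DG lam x"
    and "0 < m" and "m < n" and "real n > 1 / ln (1 / lam)"
  shows "\<exists>\<Upsilon> :: (int \<Rightarrow> real^'d) \<Rightarrow> (int \<Rightarrow> real^'d).
           (\<forall>\<eta>\<in>Xsp n. \<Upsilon> \<eta> \<in> Xsp m) \<and>
           (\<forall>\<eta>\<in>Xsp n. \<forall>\<zeta>\<in>Xsp n. \<Upsilon> (\<lambda>k. \<eta> k + \<zeta> k) = (\<lambda>k. \<Upsilon> \<eta> k + \<Upsilon> \<zeta> k)) \<and>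
           (\<forall>\<eta>\<in>Xsp n. \<forall>a::real. \<Upsilon> (\<lambda>k. a *\<^sub>R \<eta> k) = (\<lambda>k. a *\<^sub>R \<Upsilon> \<eta> k)) \<and>
           (\<exists>C. \<forall>\<eta>\<in>Xsp n. wnorm m (\<Upsilon> \<eta>) \<le> C * wnorm n \<eta>) \<and>
           (\<forall>\<eta>\<in>Xsp n. \<Upsilon> (Gamma F G DF x \<eta>) = \<eta> \<and> Gamma F G DF x (\<Upsilon> \<eta>) = \<eta>)"
proof -
  obtain e0 where "0 < e0"
    and splittings: "\<And>eps. 0 < eps \<Longrightarrow> eps < e0 \<Longrightarrow> \<exists>c Es Eu. tempered_splitting F G DF DG x lam eps c Es Eu"
    using regularly_hyperbolic_tempered_splitting[OF assms(1,2)] by blast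
  have lam: "0 < lam" "lam < 1" using assms(2) unfolding regularly_hyperbolic_def by auto
  obtain eps where eps: "0 < eps" "eps < e0" "lam * exp (2 * eps + 1 / real n) < 1"
    and eps_small: "2 * eps + 1 / real n \<le> 1 / real m"
    using small_epsilon[OF lam \<open>0 < e0\<close> assms(3-5)] by blast
  then obtain c Es Eu where "tempered_splitting F G DF DG x lam eps c Es Eu" using splittings by blast
  then interpret tempered_splitting_rate F G DF DG x lam eps c Es Eu "1 / real n"
    using eps by (intro tempered_splitting_rate.intro tempered_splitting_rate_axioms.intro) simp_all
  have growth_le: "growth \<le> 1 / real m" using eps_small unfolding growth_def .
  have tempered: "tempered \<eta>" if "\<eta> \<in> Xsp n" for \<eta>
    unfolding tempered_def using Xsp_norm_bound[OF that] by blast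
  note green_Xsp = green_Xsp[OF Xsp_norm_bound growth_le]
  show ?thesis
  proof (intro exI[of _ green] conjI ballI allI)
    show "\<exists>C. \<forall>\<eta>\<in>Xsp n. wnorm m (green \<eta>) \<le> C * wnorm n \<eta>"
      using green_Xsp(2) by blast
  qed (simp_all add: green_Xsp(1) green_add green_scale green_Gamma Gamma_green tempered)
qed

end
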